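(* Let $\alpha,\beta\in\mathbb{C}$ be constants and $h,g:\mathbb{Z}^2\to\mathbb{C}$ satisfy $\widehat{h}-\widetilde{h}=\widetilde{\widetilde{g}}-g$ and $(h+\widetilde g)g=\beta^2-\alpha^2$. For $p$ in an open set, let $\varphi_1=\varphi_1(n,m;p)$, $\varphi_2=\varphi_2(n,m;p)$ be two linearly independent solutions of $$\widetilde{\widetilde{\varphi}}+h\,\widetilde{\varphi}+\alpha^2\varphi=p^2\varphi,\qquad \widehat{\varphi}=\widetilde{\varphi}-g\,\varphi,$$ depending differentiably on $p$, and write $\varphi_{\ell,p}=\partial\varphi_\ell/\partial p$. Let $s^2=\alpha^2-p^2$, $t^2=\beta^2-p^2$, and let $\rho$ be the constant with $\varphi_1\widetilde\varphi_2-\varphi_2\widetilde\varphi_1=\rho\,s^{2n}t^{2m}$. For constants $A,B,D$ define $$\chi=A\,x_{11}+B\,(x_{12}+x_{21})+D\,x_{22},\qquad x_{ij}=\varphi_i\widetilde{\varphi}_{j,p}-\widetilde{\varphi}_j\varphi_{i,p}\ (i,j=1,2).$$ Then $$s^4\chi\widehat{\chi}+\widetilde{\chi}\widehat{\widetilde{\chi}}-t^4\chi\widetilde{\chi}-\widehat{\chi}\widehat{\widetilde{\chi}}=(\alpha^2-\beta^2)\Big(\chi\widehat{\widetilde{\chi}}+\widetilde{\chi}\widehat{\chi}+4p^2\delta\,s^{4n}t^{4m}\Big),\qquad \delta=\rho^2(AD-B^2).$$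
   Context: Shift notation: for a function $f$ on $\mathbb{Z}^2$ (variables $n,m$), $\widetilde f(n,m)=f(n+1,m)$, $\widehat f(n,m)=f(n,m+1)$, and combined accents denote composed shifts; $h,g,\alpha,\beta$ do not depend on $p$. *)

theory Defs
  imports "HOL-Analysis.Analysis"
begin

text \<open>Shift notation: for f on Z^2, tilde f (n,m) = f (n+1,m), hat f (n,m) = f (n,m+1).
  Solutions are written as functions phi n m p.\<close>

definition xfun :: "(int \<Rightarrow> int \<Rightarrow> complex \<Rightarrow> complex) \<Rightarrow> (int \<Rightarrow> int \<Rightarrow> complex \<Rightarrow> complex)
                     \<Rightarrow> int \<Rightarrow> int \<Rightarrow> complex \<Rightarrow> complex" where
  "xfun phii phij n m p =
     phii n m p * deriv (\<lambda>q. phij (n + 1) m q) p - phij (n + 1) m p * deriv (\<lambda>q. phii n m q) p"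

definition chi :: "complex \<Rightarrow> complex \<Rightarrow> complex \<Rightarrow> (int \<Rightarrow> int \<Rightarrow> complex \<Rightarrow> complex)
                    \<Rightarrow> (int \<Rightarrow> int \<Rightarrow> complex \<Rightarrow> complex) \<Rightarrow> int \<Rightarrow> int \<Rightarrow> complex \<Rightarrow> complex" where
  "chi A B D phi1 phi2 n m p =
     A * xfun phi1 phi1 n m p + B * (xfun phi1 phi2 n m p + xfun phi2 phi1 n m p)
     + D * xfun phi2 phi2 n m p"

definition solves :: "(int \<Rightarrow> int \<Rightarrow> complex) \<Rightarrow> (int \<Rightarrow> int \<Rightarrow> complex) \<Rightarrow> complex \<Rightarrow> complex
                      \<Rightarrow> (int \<Rightarrow> int \<Rightarrow> complex) \<Rightarrow> bool" where
  "solves h g \<alpha> p phi \<longleftrightarrow>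
     (\<forall>n m. phi (n + 2) m + h n m * phi (n + 1) m + \<alpha>^2 * phi n m = p^2 * phi n m
          \<and> phi n (m + 1) = phi (n + 1) m - g n m * phi n m)"

definition lin_indep2 :: "(int \<Rightarrow> int \<Rightarrow> complex) \<Rightarrow> (int \<Rightarrow> int \<Rightarrow> complex) \<Rightarrow> bool" where
  "lin_indep2 f1 f2 \<longleftrightarrow>
     (\<forall>a b :: complex. (\<forall>n m. a * f1 n m + b * f2 n m = 0) \<longrightarrow> a = 0 \<and> b = 0)"

end

theory Submission
  imports Defs
begin

text \<open>Write \<open>\<Phi> = (\<phi>\<^sub>1, \<phi>\<^sub>2)\<close> and let \<open>F\<close> be the symmetric bilinear form with Gram matrix
  \<open>[[A, B], [B, D]]\<close>, so that \<open>\<chi> = F(\<Phi>, \<Phi>(n+1)\<^sub>p) - F(\<Phi>\<^sub>p, \<Phi>(n+1))\<close>. Differentiating the Lax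
  pair in \<open>p\<close> expresses the shifts of \<open>\<chi>\<close> in \<open>n\<close>, in \<open>m\<close> and in both through \<open>\<chi>\<close> and the
  three values \<open>P = F(\<Phi>, \<Phi>)\<close>, \<open>Q = F(\<Phi>, \<Phi>(n+1))\<close>, \<open>R = F(\<Phi>(n+1), \<Phi>(n+1))\<close>: the derivatives
  of \<open>\<Phi>\<close> drop out. The claimed identity then becomes a polynomial identity up to the term
  \<open>P R - Q\<^sup>2\<close>, which is \<open>A D - B\<^sup>2\<close> times the square of the Casoratian
  \<open>\<rho> (\<alpha>\<^sup>2 - p\<^sup>2)\<^sup>n (\<beta>\<^sup>2 - p\<^sup>2)\<^sup>m\<close>. Only the compatibility condition
  \<open>(h + g(n+1)) g = \<beta>\<^sup>2 - \<alpha>\<^sup>2\<close> enters.\<close>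

definition sym_form :: "complex \<Rightarrow> complex \<Rightarrow> complex \<Rightarrow> complex \<times> complex \<Rightarrow> complex \<times> complex \<Rightarrow> complex"
  where "sym_form A B D u v =
    A * fst u * fst v + B * (fst u * snd v + snd u * fst v) + D * snd u * snd v"

lemma sym_form_gram_det:
  "sym_form A B D u u * sym_form A B D v v - (sym_form A B D u v)\<^sup>2
     = (A * D - B\<^sup>2) * (fst u * snd v - snd u * fst v)\<^sup>2"
  unfolding sym_form_def by algebra

lemma quartic_identity_of_shift_relations:
  fixes X X10 X01 X11 Q Q01 P R s g k p :: complex
  assumes X10: "X10 = s * X + 2 * p * Q"
    and X01: "X01 = (s + g * k) * X + 2 * p * (Q - g * P)"
    and X11: "X11 = s * X01 + 2 * p * Q01"
    and Q01: "Q01 = g * s * P - (s - g * k) * Q - k * R"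
  shows "s\<^sup>2 * X * X01 + X10 * X11 - (s + g * k)\<^sup>2 * X * X10 - X01 * X11
    = - (g * k) * (X * X11 + X10 * X01 + 4 * p\<^sup>2 * (P * R - Q\<^sup>2))"
  unfolding X11 Q01 X10 X01 by algebra

locale lax_pair_solution =
  fixes h g :: "int \<Rightarrow> int \<Rightarrow> complex" and \<alpha> :: complex and U :: "complex set"
    and phi :: "int \<Rightarrow> int \<Rightarrow> complex \<Rightarrow> complex"
  assumes open_U: "open U"
    and solves_lax_pair: "q \<in> U \<Longrightarrow> solves h g \<alpha> q (\<lambda>n m. phi n m q)"
    and holomorphic: "(\<lambda>q. phi n m q) holomorphic_on U"
begin

text \<open>Stated with \<open>n + 1 + 1\<close> rather than \<open>n + 2\<close> so that it rewrites shifts of \<open>phi (n + 1)\<close>.\<close>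

lemma step_n:
  assumes "q \<in> U"
  shows "phi (n + 1 + 1) m q = (q\<^sup>2 - \<alpha>\<^sup>2) * phi n m q - h n m * phi (n + 1) m q"
proof -
  have "phi (n + 2) m q + h n m * phi (n + 1) m q + \<alpha>\<^sup>2 * phi n m q = q\<^sup>2 * phi n m q"
    using solves_lax_pair[OF assms] unfolding solves_def by blast
  moreover have "n + 1 + 1 = n + 2" by simp
  ultimately show ?thesis by (simp add: algebra_simps)
qed

lemma step_m: "q \<in> U \<Longrightarrow> phi n (m + 1) q = phi (n + 1) m q - g n m * phi n m q"
  using solves_lax_pair unfolding solves_def by blast

lemma has_deriv: "p \<in> U \<Longrightarrow> ((\<lambda>q. phi n m q) has_field_derivative deriv (\<lambda>q. phi n m q) p) (at p)"
  using holomorphic_derivI[OF holomorphic open_U] .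

lemma deriv_step_n:
  assumes "p \<in> U"
  shows "deriv (\<lambda>q. phi (n + 1 + 1) m q) p = (p\<^sup>2 - \<alpha>\<^sup>2) * deriv (\<lambda>q. phi n m q) p
    + 2 * p * phi n m p - h n m * deriv (\<lambda>q. phi (n + 1) m q) p"
proof -
  have "((\<lambda>q. (q\<^sup>2 - \<alpha>\<^sup>2) * phi n m q - h n m * phi (n + 1) m q) has_field_derivative
      (p\<^sup>2 - \<alpha>\<^sup>2) * deriv (\<lambda>q. phi n m q) p + 2 * p * phi n m p
        - h n m * deriv (\<lambda>q. phi (n + 1) m q) p) (at p)"
    by (auto intro!: derivative_eq_intros has_deriv assms simp: algebra_simps)
  then have "((\<lambda>q. phi (n + 1 + 1) m q) has_field_derivative
      (p\<^sup>2 - \<alpha>\<^sup>2) * deriv (\<lambda>q. phi n m q) p + 2 * p * phi n m p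
        - h n m * deriv (\<lambda>q. phi (n + 1) m q) p) (at p)"
    by (rule has_field_derivative_transform_within_open[OF _ open_U assms]) (metis step_n)
  then show ?thesis by (rule DERIV_imp_deriv)
qed

lemma deriv_step_m:
  assumes "p \<in> U"
  shows "deriv (\<lambda>q. phi n (m + 1) q) p
    = deriv (\<lambda>q. phi (n + 1) m q) p - g n m * deriv (\<lambda>q. phi n m q) p"
proof -
  have "((\<lambda>q. phi (n + 1) m q - g n m * phi n m q) has_field_derivative
      deriv (\<lambda>q. phi (n + 1) m q) p - g n m * deriv (\<lambda>q. phi n m q) p) (at p)"
    by (auto intro!: derivative_eq_intros has_deriv assms)
  then have "((\<lambda>q. phi n (m + 1) q) has_field_derivative
      deriv (\<lambda>q. phi (n + 1) m q) p - g n m * deriv (\<lambda>q. phi n m q) p) (at p)"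
    by (rule has_field_derivative_transform_within_open[OF _ open_U assms]) (simp add: step_m)
  then show ?thesis by (rule DERIV_imp_deriv)
qed

end

locale lax_pair_solutions =
  one: lax_pair_solution h g \<alpha> U phi1 + two: lax_pair_solution h g \<alpha> U phi2
  for h g \<alpha> U phi1 phi2
begin

abbreviation Phi :: "int \<Rightarrow> int \<Rightarrow> complex \<Rightarrow> complex \<times> complex"
  where "Phi n m p \<equiv> (phi1 n m p, phi2 n m p)"

lemma chi_shift_n:
  assumes "p \<in> U"
  shows "chi A B D phi1 phi2 (n + 1) m p = (\<alpha>\<^sup>2 - p\<^sup>2) * chi A B D phi1 phi2 n m p
    + 2 * p * sym_form A B D (Phi n m p) (Phi (n + 1) m p)"
  unfolding chi_def xfun_def sym_form_def fst_conv snd_conv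
    one.step_n[OF assms] two.step_n[OF assms] one.deriv_step_n[OF assms] two.deriv_step_n[OF assms]
  by algebra

lemma chi_shift_m:
  assumes "p \<in> U"
  shows "chi A B D phi1 phi2 n (m + 1) p
    = (\<alpha>\<^sup>2 - p\<^sup>2 + g n m * (h n m + g (n + 1) m)) * chi A B D phi1 phi2 n m p
      + 2 * p * (sym_form A B D (Phi n m p) (Phi (n + 1) m p)
        - g n m * sym_form A B D (Phi n m p) (Phi n m p))"
  unfolding chi_def xfun_def sym_form_def fst_conv snd_conv
    one.step_m[OF assms] two.step_m[OF assms] one.deriv_step_m[OF assms] two.deriv_step_m[OF assms]
    one.step_n[OF assms] two.step_n[OF assms] one.deriv_step_n[OF assms] two.deriv_step_n[OF assms]
  by algebra

lemma sym_form_shift_m: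
  assumes "p \<in> U"
  shows "sym_form A B D (Phi n (m + 1) p) (Phi (n + 1) (m + 1) p)
    = g n m * (\<alpha>\<^sup>2 - p\<^sup>2) * sym_form A B D (Phi n m p) (Phi n m p)
      - (\<alpha>\<^sup>2 - p\<^sup>2 - g n m * (h n m + g (n + 1) m)) * sym_form A B D (Phi n m p) (Phi (n + 1) m p)
      - (h n m + g (n + 1) m) * sym_form A B D (Phi (n + 1) m p) (Phi (n + 1) m p)"
  unfolding sym_form_def fst_conv snd_conv
    one.step_m[OF assms] two.step_m[OF assms]
    one.step_n[OF assms] two.step_n[OF assms]
  by algebra

end

theorem proposition4p3:
  fixes \<alpha> \<beta> A B D p :: complex
    and h g :: "int \<Rightarrow> int \<Rightarrow> complex"
    and phi1 phi2 :: "int \<Rightarrow> int \<Rightarrow> complex \<Rightarrow> complex"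
    and \<rho> :: "complex \<Rightarrow> complex"
    and U :: "complex set"
  assumes hg1: "\<And>n m. h n (m + 1) - h (n + 1) m = g (n + 2) m - g n m"
    and hg2: "\<And>n m. (h n m + g (n + 1) m) * g n m = \<beta>^2 - \<alpha>^2"
    and U_open: "open U"
    and pU: "p \<in> U"
    and sol1: "\<And>q. q \<in> U \<Longrightarrow> solves h g \<alpha> q (\<lambda>n m. phi1 n m q)"
    and sol2: "\<And>q. q \<in> U \<Longrightarrow> solves h g \<alpha> q (\<lambda>n m. phi2 n m q)"
    and indep: "\<And>q. q \<in> U \<Longrightarrow> lin_indep2 (\<lambda>n m. phi1 n m q) (\<lambda>n m. phi2 n m q)"
    and diff1: "\<And>n m. (\<lambda>q. phi1 n m q) holomorphic_on U"
    and diff2: "\<And>n m. (\<lambda>q. phi2 n m q) holomorphic_on U"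
    and wron: "\<And>n m q. q \<in> U \<Longrightarrow>
       phi1 n m q * phi2 (n + 1) m q - phi2 n m q * phi1 (n + 1) m q
         = \<rho> q * (\<alpha>^2 - q^2) powi n * (\<beta>^2 - q^2) powi m"
  shows "\<And>n m.
    (let X = chi A B D phi1 phi2;
         s2 = \<alpha>^2 - p^2; t2 = \<beta>^2 - p^2;
         \<delta> = (\<rho> p)^2 * (A * D - B^2)
     in s2^2 * X n m p * X n (m + 1) p + X (n + 1) m p * X (n + 1) (m + 1) p
        - t2^2 * X n m p * X (n + 1) m p - X n (m + 1) p * X (n + 1) (m + 1) p
      = (\<alpha>^2 - \<beta>^2) * (X n m p * X (n + 1) (m + 1) p + X (n + 1) m p * X n (m + 1) p
          + 4 * p^2 * \<delta> * (s2 powi n)^2 * (t2 powi m)^2))"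
proof -
  fix n m
  interpret lax_pair_solutions h g \<alpha> U phi1 phi2
    by unfold_locales (use U_open sol1 sol2 diff1 diff2 in auto)
  have s2_plus_gk: "\<alpha>\<^sup>2 - p\<^sup>2 + g n m * (h n m + g (n + 1) m) = \<beta>\<^sup>2 - p\<^sup>2"
    and minus_gk: "- (g n m * (h n m + g (n + 1) m)) = \<alpha>\<^sup>2 - \<beta>\<^sup>2"
    using hg2[of n m] by (simp_all add: mult.commute)
  have gram: "sym_form A B D (Phi n m p) (Phi n m p) * sym_form A B D (Phi (n + 1) m p) (Phi (n + 1) m p)
      - (sym_form A B D (Phi n m p) (Phi (n + 1) m p))\<^sup>2
    = (\<rho> p)\<^sup>2 * (A * D - B\<^sup>2) * ((\<alpha>\<^sup>2 - p\<^sup>2) powi n)\<^sup>2 * ((\<beta>\<^sup>2 - p\<^sup>2) powi m)\<^sup>2"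
    unfolding sym_form_gram_det fst_conv snd_conv wron[OF pU] by (simp add: power_mult_distrib)
  show "?thesis n m"
    using quartic_identity_of_shift_relations[OF chi_shift_n[OF pU, of A B D n m]
        chi_shift_m[OF pU, of A B D n m] chi_shift_n[OF pU, of A B D n "m + 1"]
        sym_form_shift_m[OF pU, of A B D n m]]
    unfolding Let_def s2_plus_gk minus_gk gram by (simp add: mult.assoc)
qed

end
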